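(* Let $\mathbf z,\mathbf w$ be jointly distributed $M$-dimensional random vectors whose components have finite positive variance, with standardized versions $\mathbf z',\mathbf w'$, and assume $\boldsymbol\Sigma_{\mathbf z'\mathbf z'}$ and $\boldsymbol\Sigma_{\mathbf z'\mathbf w'}$ are full rank. Then $$m_{\mathrm{SVD}}(\mathbf z,\mathbf w)\ \ge\ 1-\sqrt{M\sum_{l=1}^M\mathrm{Var}[z'_l-w'_l]},$$ where the variance is over the joint distribution of $(\mathbf z',\mathbf w')$.
   Context: For $M$-dimensional random vectors $\mathbf z,\mathbf w$ (jointly distributed, components with finite positive variance), let $\mathbf z',\mathbf w'$ be the standardized vectors $z'_i=(z_i-\mathbb E[z_i])/\operatorname{std}(z_i)$, $w'_i=(w_i-\mathbb E[w_i])/\operatorname{std}(w_i)$, and let $\boldsymbol\Sigma_{\mathbf z'\mathbf w'}$ be the cross-covariance matrix with entries $\mathrm{Cov}[z'_i,w'_j]$ (and $\boldsymbol\Sigma_{\mathbf z'\mathbf z'}$ the covariance matrix of $\mathbf z'$). Let $\{\mathbf u_i\}_{i=1}^M$, $\{\mathbf v_i\}_{i=1}^M$ be the left and right singular vectors of $\boldsymbol\Sigma_{\mathbf z'\mathbf w'}$. Define $m_{\mathrm{SVD}}(\mathbf z,\mathbf w)=\frac1M\sum_{i=1}^M\mathrm{Cov}[\mathbf u_i^\top\mathbf z',\mathbf v_i^\top\mathbf w']$ (equivalently, $\frac1M$ times the sum of the singular values of $\boldsymbol\Sigma_{\mathbf z'\mathbf w'}$) and $d_{\mathrm{SVD}}(\mathbf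 z,\mathbf w)=1-m_{\mathrm{SVD}}(\mathbf z,\mathbf w)$. *)

theory Defs
  imports "HOL-Probability.Probability"
begin

definition mean :: "'a measure \<Rightarrow> ('a \<Rightarrow> real) \<Rightarrow> real" where
  "mean p X = integral\<^sup>L p X"

definition cov :: "'a measure \<Rightarrow> ('a \<Rightarrow> real) \<Rightarrow> ('a \<Rightarrow> real) \<Rightarrow> real" where
  "cov p X Y = integral\<^sup>L p (\<lambda>\<omega>. (X \<omega> - mean p X) * (Y \<omega> - mean p Y))"

definition var :: "'a measure \<Rightarrow> ('a \<Rightarrow> real) \<Rightarrow> real" where
  "var p X = cov p X X"

definition standardize :: "'a measure \<Rightarrow> ('a \<Rightarrow> real^'n) \<Rightarrow> 'a \<Rightarrow> real^'n" where
  "standardize p z = (\<lambda>\<omega>. \<chi> i. (z \<omega> $ i - mean p (\<lambda>\<eta>. z \<eta> $ i)) / sqrt (var p (\<lambda>\<eta>. z \<eta> $ i)))"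

definition cross_cov :: "'a measure \<Rightarrow> ('a \<Rightarrow> real^'n) \<Rightarrow> ('a \<Rightarrow> real^'n) \<Rightarrow> real^'n^'n" where
  "cross_cov p x y = (\<chi> i j. cov p (\<lambda>\<omega>. x \<omega> $ i) (\<lambda>\<omega>. y \<omega> $ j))"

definition diag_mat :: "real^'n \<Rightarrow> real^'n^'n" where
  "diag_mat s = (\<chi> i j. if i = j then s $ i else 0)"

definition is_svd :: "real^'n^'n \<Rightarrow> real^'n^'n \<Rightarrow> real^'n \<Rightarrow> real^'n^'n \<Rightarrow> bool" where
  "is_svd A U s V \<longleftrightarrow> orthogonal_matrix U \<and> orthogonal_matrix V \<and> (\<forall>i. 0 \<le> s $ i)
     \<and> A = U ** diag_mat s ** transpose V"

definition m_SVD :: "'a measure \<Rightarrow> ('a \<Rightarrow> real^'n) \<Rightarrow> ('a \<Rightarrow> real^'n) \<Rightarrow> real" where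
  "m_SVD p z w =
    (let z' = standardize p z; w' = standardize p w;
         (U, V) = (SOME (U, V). \<exists>s. is_svd (cross_cov p z' w') U s V)
     in (1 / real CARD('n)) *
        (\<Sum>i\<in>UNIV. cov p (\<lambda>\<omega>. column i U \<bullet> z' \<omega>) (\<lambda>\<omega>. column i V \<bullet> w' \<omega>)))"

definition d_SVD :: "'a measure \<Rightarrow> ('a \<Rightarrow> real^'n) \<Rightarrow> ('a \<Rightarrow> real^'n) \<Rightarrow> real" where
  "d_SVD p z w = 1 - m_SVD p z w"

end

theory Submission
  imports Defs
begin

text \<open>
  Since m_SVD picks an SVD of \<Sigma> = \<Sigma>_{z'w'} by Hilbert choice, its existence is needed.
  For pairwise distinct positive weights w, a pair (U, V) of orthogonal matrices maximising the
  weighted trace \<Sum>_k w_k (U^T A V)_kk exists by compactness. A Givens rotation in the (i, j)-plane changes the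
  objective by (c - 1) \<alpha> + s \<beta> with \<beta> = w_i B_ji - w_j B_ij, so maximality forces \<beta> = 0; the
  same for A^T gives w_i B_ij = w_j B_ji, hence (w_i^2 - w_j^2) B_ji = 0 and B = U^T A V is
  diagonal. Flipping the sign of one axis shows that its diagonal is nonnegative.

  By bilinearity of covariance, Cov[u_i^T z', v_i^T w'] = u_i^T \<Sigma> v_i = s_i, so m_SVD is the
  mean singular value. Moreover trace \<Sigma> = \<Sum>_k s_k <v_k, u_k> \<le> \<Sum>_k s_k, and the unit variances
  give \<Sum>_l Var[z'_l - w'_l] = 2M - 2 trace \<Sigma>. Hence y = 1 - m_SVD is at most \<Sum>_l Var / (2M),
  and if y > 0 then also y \<le> 1, so y^2 \<le> y \<le> M \<Sum>_l Var.
\<close>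

lemma matrix_mult_nth_diag: "(A ** B) $ k $ k = A $ k \<bullet> column k B"
  by (simp add: matrix_matrix_mult_def inner_vec_def column_def)

lemma diag_mat_mult_nth: "(diag_mat d ** B) $ a $ b = d $ a * B $ a $ b"
  by (simp add: diag_mat_def matrix_matrix_mult_def if_distrib if_distribR cong: if_cong)

lemma transpose_diag_mat [simp]: "transpose (diag_mat d) = diag_mat d"
  by (simp add: diag_mat_def transpose_def vec_eq_iff)

lemma column_inner_mult_column:
  fixes U A V :: "real^'n^'n"
  shows "column i U \<bullet> (A *v column i V) = (transpose U ** A ** V) $ i $ i"
proof -
  have "transpose U $ i = column i U"
    by (simp add: transpose_def column_def)
  moreover have "column i (A ** V) = A *v column i V"
    by (simp add: vec_eq_iff column_def matrix_matrix_mult_def matrix_vector_mult_def)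
  ultimately show ?thesis
    by (simp add: matrix_mult_nth_diag flip: matrix_mul_assoc)
qed

lemma transpose_mult_left_rotate:
  fixes U G A V :: "real^'n^'n"
  shows "transpose (U ** G) ** A ** V = transpose G ** (transpose U ** A ** V)"
  by (simp add: matrix_transpose_mul matrix_mul_assoc)

lemma is_svd_diagonalizes: "is_svd A U s V \<Longrightarrow> transpose U ** A ** V = diag_mat s"
  unfolding is_svd_def orthogonal_matrix_def
  by (metis matrix_mul_assoc matrix_mul_lid matrix_mul_rid)

lemma orthogonal_matrix_row_norm:
  "orthogonal_matrix (U::real^'n^'n) \<Longrightarrow> norm (U $ i) = 1"
  using orthogonal_matrix_orthonormal_rows[of U] by (simp add: row_def vec_nth_inverse)

lemma compact_orthogonal_matrices: "compact {U::real^'n^'n. orthogonal_matrix U}"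
proof (rule compact_eq_bounded_closed[THEN iffD2], rule conjI)
  show "bounded {U::real^'n^'n. orthogonal_matrix U}"
    unfolding bounded_iff
  proof (intro exI ballI)
    fix U :: "real^'n^'n" assume "U \<in> {U. orthogonal_matrix U}"
    then have "\<And>i. norm (U $ i) = 1"
      by (simp add: orthogonal_matrix_row_norm)
    then show "norm U \<le> sqrt (real CARD('n))"
      unfolding norm_vec_def[of U] L2_set_def by simp
  qed
  have "closed {U::real^'n^'n. transpose U ** U = mat 1}"
    unfolding matrix_matrix_mult_def transpose_def
    by (intro closed_Collect_eq continuous_intros)
  then show "closed {U::real^'n^'n. orthogonal_matrix U}"
    by (simp add: orthogonal_matrix)
qed

definition weighted_trace :: "('n \<Rightarrow> real) \<Rightarrow> real^'n^'n \<Rightarrow> real" where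
  "weighted_trace w B = (\<Sum>k\<in>UNIV. w k * B $ k $ k)"

lemma weighted_trace_transpose: "weighted_trace w (transpose B) = weighted_trace w B"
  by (simp add: weighted_trace_def transpose_def)

definition givens_rotation :: "'n \<Rightarrow> 'n \<Rightarrow> real \<Rightarrow> real \<Rightarrow> real^'n^'n" where
  "givens_rotation i j c s = transpose (\<chi> b.
     if b = i then c *\<^sub>R axis i 1 + s *\<^sub>R axis j 1
     else if b = j then (- s) *\<^sub>R axis i 1 + c *\<^sub>R axis j 1
     else axis b 1)"

lemma orthogonal_matrix_givens_rotation:
  assumes "i \<noteq> j" "c\<^sup>2 + s\<^sup>2 = 1"
  shows "orthogonal_matrix (givens_rotation i j c s)"
  using assms
  unfolding orthogonal_matrix_orthonormal_columns givens_rotation_def orthogonal_def norm_eq_1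
  by (auto simp: row_def vec_nth_inverse inner_axis_axis power2_eq_square algebra_simps)

lemma weighted_trace_givens_rotation:
  assumes "i \<noteq> j"
  shows "weighted_trace w (transpose (givens_rotation i j c s) ** B) = weighted_trace w B
     + (c - 1) * (w i * B $ i $ i + w j * B $ j $ j) + s * (w i * B $ j $ i - w j * B $ i $ j)"
proof -
  have "weighted_trace w (transpose (givens_rotation i j c s) ** B)
      = (\<Sum>k\<in>UNIV. w k * B $ k $ k
          + (if k = i then (c - 1) * w i * B $ i $ i + s * w i * B $ j $ i else 0)
          + (if k = j then (c - 1) * w j * B $ j $ j - s * w j * B $ i $ j else 0))"
    unfolding weighted_trace_def
    using assms
    by (intro sum.cong) (auto simp: matrix_mult_nth_diag givens_rotation_def
        inner_add_left inner_axis' column_def algebra_simps)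
  then show ?thesis
    by (simp add: sum.distrib weighted_trace_def algebra_simps)
qed

definition reflection_matrix :: "'n \<Rightarrow> real^'n^'n" where
  "reflection_matrix i = diag_mat (\<chi> k. if k = i then -1 else 1)"

lemma orthogonal_matrix_reflection_matrix: "orthogonal_matrix (reflection_matrix i)"
  by (simp add: orthogonal_matrix reflection_matrix_def diag_mat_mult_nth vec_eq_iff)
     (simp add: diag_mat_def mat_def)

lemma weighted_trace_reflection_matrix:
  "weighted_trace w (transpose (reflection_matrix i) ** B) = weighted_trace w B - 2 * w i * B $ i $ i"
proof -
  have "weighted_trace w (transpose (reflection_matrix i) ** B)
      = (\<Sum>k\<in>UNIV. w k * B $ k $ k - (if k = i then 2 * w i * B $ i $ i else 0))"
    unfolding weighted_trace_def
    by (intro sum.cong) (auto simp: reflection_matrix_def diag_mat_mult_nth)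
  then show ?thesis
    by (simp add: sum_subtractf weighted_trace_def)
qed

lemma max_on_unit_circle_imp_zero:
  fixes a b :: real
  assumes "\<And>c s. c\<^sup>2 + s\<^sup>2 = 1 \<Longrightarrow> c * a + s * b \<le> a"
  shows "b = 0"
proof (rule ccontr)
  assume "b \<noteq> 0"
  define r where "r = sqrt (a\<^sup>2 + b\<^sup>2)"
  have r2: "r\<^sup>2 = a\<^sup>2 + b\<^sup>2"
    by (simp add: r_def)
  have "r > 0"
    using \<open>b \<noteq> 0\<close> by (simp add: r_def sum_power2_gt_zero_iff)
  then have "(a / r)\<^sup>2 + (b / r)\<^sup>2 = 1"
    using r2 \<open>b \<noteq> 0\<close> by (simp add: power_divide add_divide_distrib[symmetric])
  from assms[OF this] have "(a\<^sup>2 + b\<^sup>2) / r \<le> a"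
    by (simp add: power2_eq_square add_divide_distrib)
  moreover have "(a\<^sup>2 + b\<^sup>2) / r = r"
    unfolding r2[symmetric] using \<open>r > 0\<close> by (simp add: power2_eq_square)
  ultimately have "r \<le> a"
    by simp
  then have "r\<^sup>2 \<le> a\<^sup>2"
    using \<open>r > 0\<close> by (intro power_mono) auto
  then show False
    using r2 \<open>b \<noteq> 0\<close> by simp
qed

definition maximizes_weighted_trace ::
    "('n \<Rightarrow> real) \<Rightarrow> real^'n^'n \<Rightarrow> real^'n^'n \<Rightarrow> real^'n^'n \<Rightarrow> bool" where
  "maximizes_weighted_trace w A U V \<longleftrightarrow> orthogonal_matrix U \<and> orthogonal_matrix V \<and>
     (\<forall>U' V'. orthogonal_matrix U' \<longrightarrow> orthogonal_matrix V' \<longrightarrow>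
        weighted_trace w (transpose U' ** A ** V') \<le> weighted_trace w (transpose U ** A ** V))"

lemma maximizes_weighted_trace_exists:
  fixes A :: "real^'n^'n"
  shows "\<exists>U V. maximizes_weighted_trace w A U V"
proof -
  define S where "S = {U::real^'n^'n. orthogonal_matrix U} \<times> {V::real^'n^'n. orthogonal_matrix V}"
  define f where "f x = weighted_trace w (transpose (fst x) ** A ** snd x)" for x
  have "compact S"
    unfolding S_def by (intro compact_Times compact_orthogonal_matrices)
  moreover have "S \<noteq> {}"
    unfolding S_def using orthogonal_matrix_id by blast
  moreover have "continuous_on S f"
    unfolding f_def weighted_trace_def matrix_matrix_mult_def transpose_def
    by (intro continuous_intros)
  ultimately obtain x where "x \<in> S" and x_max: "\<And>y. y \<in> S \<Longrightarrow> f y \<le> f x"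
    using continuous_attains_sup[of S f] by blast
  obtain U V where "x = (U, V)"
    by fastforce
  have "maximizes_weighted_trace w A U V"
    unfolding maximizes_weighted_trace_def
  proof (intro conjI allI impI)
    show "orthogonal_matrix U" "orthogonal_matrix V"
      using \<open>x \<in> S\<close> \<open>x = (U, V)\<close> by (simp_all add: S_def)
    show "weighted_trace w (transpose U' ** A ** V') \<le> weighted_trace w (transpose U ** A ** V)"
      if "orthogonal_matrix U'" "orthogonal_matrix V'" for U' V'
      using x_max[of "(U', V')"] that \<open>x = (U, V)\<close> by (simp add: S_def f_def)
  qed
  then show ?thesis
    by blast
qed

lemma maximizes_weighted_trace_transpose:
  fixes A :: "real^'n^'n"
  assumes "maximizes_weighted_trace w A U V"
  shows "maximizes_weighted_trace w (transpose A) V U"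
proof -
  have "weighted_trace w (transpose U ** transpose A ** V) = weighted_trace w (transpose V ** A ** U)"
    for U V :: "real^'n^'n"
    by (metis weighted_trace_transpose matrix_transpose_mul matrix_mul_assoc transpose_transpose)
  then show ?thesis
    using assms unfolding maximizes_weighted_trace_def by simp
qed

lemma maximizes_weighted_trace_offdiag:
  assumes max: "maximizes_weighted_trace w A U V" and "i \<noteq> j"
  defines "B \<equiv> transpose U ** A ** V"
  shows "w i * B $ j $ i = w j * B $ i $ j"
proof -
  have U: "orthogonal_matrix U"
    and le_max: "\<And>U'. orthogonal_matrix U' \<Longrightarrow>
      weighted_trace w (transpose U' ** A ** V) \<le> weighted_trace w B"
    using max by (simp_all add: maximizes_weighted_trace_def B_def)
  have "c * (w i * B $ i $ i + w j * B $ j $ j) + s * (w i * B $ j $ i - w j * B $ i $ j)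
      \<le> w i * B $ i $ i + w j * B $ j $ j" if "c\<^sup>2 + s\<^sup>2 = 1" for c s
  proof -
    have "orthogonal_matrix (U ** givens_rotation i j c s)"
      using U \<open>i \<noteq> j\<close> that by (intro orthogonal_matrix_mul orthogonal_matrix_givens_rotation)
    from le_max[OF this]
    have "weighted_trace w (transpose (givens_rotation i j c s) ** B) \<le> weighted_trace w B"
      by (simp add: transpose_mult_left_rotate B_def)
    then show ?thesis
      by (simp add: weighted_trace_givens_rotation[OF \<open>i \<noteq> j\<close>] left_diff_distrib)
  qed
  then have "w i * B $ j $ i - w j * B $ i $ j = 0"
    by (rule max_on_unit_circle_imp_zero)
  then show ?thesis
    by simp
qed

lemma maximizes_weighted_trace_diag_nonneg:
  assumes max: "maximizes_weighted_trace w A U V" and "w i > 0"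
  defines "B \<equiv> transpose U ** A ** V"
  shows "B $ i $ i \<ge> 0"
proof -
  have U: "orthogonal_matrix U"
    and le_max: "\<And>U'. orthogonal_matrix U' \<Longrightarrow>
      weighted_trace w (transpose U' ** A ** V) \<le> weighted_trace w B"
    using max by (simp_all add: maximizes_weighted_trace_def B_def)
  have "orthogonal_matrix (U ** reflection_matrix i)"
    using U by (intro orthogonal_matrix_mul orthogonal_matrix_reflection_matrix)
  from le_max[OF this]
  have "weighted_trace w (transpose (reflection_matrix i) ** B) \<le> weighted_trace w B"
    by (simp add: transpose_mult_left_rotate B_def)
  then have "0 \<le> w i * B $ i $ i"
    by (simp add: weighted_trace_reflection_matrix)
  then show ?thesis
    using \<open>w i > 0\<close> by (simp add: zero_le_mult_iff)
qed

lemma maximizes_weighted_trace_diagonal: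
  assumes max: "maximizes_weighted_trace w A U V" and "inj w" and w_pos: "\<And>k. w k > 0"
  defines "B \<equiv> transpose U ** A ** V"
  shows "B = diag_mat (\<chi> k. B $ k $ k)"
proof -
  have "B $ j $ i = 0" if "i \<noteq> j" for i j
  proof -
    have "w i * B $ j $ i = w j * B $ i $ j"
      using maximizes_weighted_trace_offdiag[OF max \<open>i \<noteq> j\<close>] by (simp add: B_def)
    moreover have "w i * B $ i $ j = w j * B $ j $ i"
    proof -
      have "transpose V ** transpose A ** U = transpose B"
        by (simp add: B_def matrix_transpose_mul matrix_mul_assoc)
      then show ?thesis
        using maximizes_weighted_trace_offdiag[OF maximizes_weighted_trace_transpose[OF max] \<open>i \<noteq> j\<close>]
        by (simp add: transpose_def)
    qed
    ultimately have "(w i - w j) * (w i + w j) * B $ j $ i = 0"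
      by (simp add: algebra_simps)
    moreover have "w i \<noteq> w j"
      using \<open>inj w\<close> \<open>i \<noteq> j\<close> by (auto dest: injD)
    moreover have "w i + w j \<noteq> 0"
      using w_pos[of i] w_pos[of j] by simp
    ultimately show ?thesis
      by simp
  qed
  then show ?thesis
    by (auto simp: vec_eq_iff diag_mat_def)
qed

lemma svd_exists: "\<exists>U s V. is_svd (A :: real^'n^'n) U s V"
proof -
  define w :: "'n \<Rightarrow> real" where "w k = real (to_nat k) + 1" for k
  have "inj w" and w_pos: "\<And>k. w k > 0"
    by (auto simp: w_def inj_def)
  obtain U V where max: "maximizes_weighted_trace w A U V"
    using maximizes_weighted_trace_exists by blast
  define s where "s = (\<chi> k. (transpose U ** A ** V) $ k $ k)"
  have U: "orthogonal_matrix U" and V: "orthogonal_matrix V"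
    using max by (simp_all add: maximizes_weighted_trace_def)
  have "U ** diag_mat s ** transpose V = (U ** transpose U) ** A ** (V ** transpose V)"
    using maximizes_weighted_trace_diagonal[OF max \<open>inj w\<close> w_pos]
    by (simp add: s_def matrix_mul_assoc)
  also have "\<dots> = A"
    using U V by (simp add: orthogonal_matrix_def)
  finally have "is_svd A U s V"
    using U V maximizes_weighted_trace_diag_nonneg[OF max w_pos] by (simp add: is_svd_def s_def)
  then show ?thesis
    by blast
qed

lemma trace_le_sum_singular_values:
  assumes "is_svd A U s V"
  shows "trace A \<le> (\<Sum>k\<in>UNIV. s $ k)"
proof -
  have U: "orthogonal_matrix U" and V: "orthogonal_matrix V" and s: "\<And>k. 0 \<le> s $ k"
    and A: "A = U ** diag_mat s ** transpose V"
    using assms by (auto simp: is_svd_def)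
  have "trace A = trace (diag_mat s ** (transpose V ** U))"
    unfolding A by (metis trace_mul_sym matrix_mul_assoc)
  also have "\<dots> = (\<Sum>k\<in>UNIV. s $ k * (column k V \<bullet> column k U))"
  proof -
    have "(transpose V ** U) $ k $ k = column k V \<bullet> column k U" for k
      by (simp add: matrix_matrix_mult_def inner_vec_def column_def transpose_def)
    then show ?thesis
      by (simp add: trace_def diag_mat_mult_nth)
  qed
  also have "\<dots> \<le> (\<Sum>k\<in>UNIV. s $ k)"
  proof (rule sum_mono)
    fix k
    have "column k V \<bullet> column k U \<le> norm (column k V) * norm (column k U)"
      by (rule norm_cauchy_schwarz)
    then have "column k V \<bullet> column k U \<le> 1"
      using U V by (simp add: orthogonal_matrix_orthonormal_columns)
    then show "s $ k * (column k V \<bullet> column k U) \<le> s $ k"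
      using mult_left_mono[OF _ s] by fastforce
  qed
  finally show ?thesis .
qed

definition square_integrable :: "'a measure \<Rightarrow> ('a \<Rightarrow> real) \<Rightarrow> bool" where
  "square_integrable M X \<longleftrightarrow> X \<in> borel_measurable M \<and> integrable M (\<lambda>\<omega>. (X \<omega>)\<^sup>2)"

lemma abs_mult_le_sum_squares: "\<bar>x * y\<bar> \<le> x\<^sup>2 + (y::real)\<^sup>2"
proof -
  have "2 * (\<bar>x\<bar> * \<bar>y\<bar>) \<le> x\<^sup>2 + y\<^sup>2"
    using sum_squares_bound[of "\<bar>x\<bar>" "\<bar>y\<bar>"] by (simp add: mult.assoc)
  moreover have "0 \<le> \<bar>x\<bar> * \<bar>y\<bar>"
    by simp
  ultimately show ?thesis
    unfolding abs_mult by linarith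
qed

context prob_space
begin

lemma square_integrable_integrable: "square_integrable M X \<Longrightarrow> integrable M X"
  unfolding square_integrable_def by (auto intro: square_integrable_imp_integrable)

lemma integrable_mult_square_integrable:
  assumes "square_integrable M X" "square_integrable M Y"
  shows "integrable M (\<lambda>\<omega>. X \<omega> * Y \<omega>)"
proof (rule Bochner_Integration.integrable_bound)
  show "integrable M (\<lambda>\<omega>. (X \<omega>)\<^sup>2 + (Y \<omega>)\<^sup>2)"
    using assms unfolding square_integrable_def by auto
  show "(\<lambda>\<omega>. X \<omega> * Y \<omega>) \<in> borel_measurable M"
    using assms unfolding square_integrable_def by auto
  show "AE \<omega> in M. norm (X \<omega> * Y \<omega>) \<le> norm ((X \<omega>)\<^sup>2 + (Y \<omega>)\<^sup>2)"
    using abs_mult_le_sum_squares by auto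
qed

lemma square_integrable_affine:
  assumes "square_integrable M X"
  shows "square_integrable M (\<lambda>\<omega>. a * X \<omega> + b)"
proof -
  have "(\<lambda>\<omega>. (a * X \<omega> + b)\<^sup>2) = (\<lambda>\<omega>. a\<^sup>2 * (X \<omega>)\<^sup>2 + (2 * a * b) * X \<omega> + b\<^sup>2)"
    by (auto simp: power2_eq_square algebra_simps)
  moreover have "integrable M (\<lambda>\<omega>. a\<^sup>2 * (X \<omega>)\<^sup>2 + (2 * a * b) * X \<omega> + b\<^sup>2)"
    using assms square_integrable_integrable[OF assms] unfolding square_integrable_def by auto
  ultimately show ?thesis
    using assms unfolding square_integrable_def by auto
qed

lemma mean_affine: "integrable M X \<Longrightarrow> mean M (\<lambda>\<omega>. a * X \<omega> + b) = a * mean M X + b"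
  unfolding mean_def by (simp add: prob_space)

lemma mean_sum:
  assumes "finite I" "\<And>i. i \<in> I \<Longrightarrow> integrable M (X i)"
  shows "mean M (\<lambda>\<omega>. \<Sum>i\<in>I. a i * X i \<omega>) = (\<Sum>i\<in>I. a i * mean M (X i))"
  unfolding mean_def using assms by simp

lemma cov_commute: "cov M X Y = cov M Y X"
  unfolding cov_def by (simp add: mult.commute)

lemma var_nonneg: "var M X \<ge> 0"
  unfolding var_def cov_def by (rule integral_nonneg_AE) auto

lemma cov_affine:
  assumes "integrable M X" "integrable M Y"
  shows "cov M (\<lambda>\<omega>. a * X \<omega> + b) (\<lambda>\<omega>. c * Y \<omega> + d) = a * c * cov M X Y"
proof -
  have "(\<lambda>\<omega>. (a * X \<omega> + b - (a * mean M X + b)) * (c * Y \<omega> + d - (c * mean M Y + d)))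
     = (\<lambda>\<omega>. (a * c) * ((X \<omega> - mean M X) * (Y \<omega> - mean M Y)))"
    by (auto simp: algebra_simps)
  then show ?thesis
    unfolding cov_def mean_affine[OF assms(1)] mean_affine[OF assms(2)] by simp
qed

lemma cov_sum:
  assumes "finite I" "finite J"
    and "\<And>i. i \<in> I \<Longrightarrow> square_integrable M (X i)" "\<And>j. j \<in> J \<Longrightarrow> square_integrable M (Y j)"
  shows "cov M (\<lambda>\<omega>. \<Sum>i\<in>I. a i * X i \<omega>) (\<lambda>\<omega>. \<Sum>j\<in>J. b j * Y j \<omega>)
       = (\<Sum>i\<in>I. \<Sum>j\<in>J. a i * b j * cov M (X i) (Y j))"
proof -
  define Xc where "Xc i = (\<lambda>\<omega>. X i \<omega> - mean M (X i))" for i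
  define Yc where "Yc j = (\<lambda>\<omega>. Y j \<omega> - mean M (Y j))" for j
  have "square_integrable M (Xc i)" if "i \<in> I" for i
    using square_integrable_affine[OF assms(3)[OF that], of 1 "- mean M (X i)"] by (simp add: Xc_def)
  moreover have "square_integrable M (Yc j)" if "j \<in> J" for j
    using square_integrable_affine[OF assms(4)[OF that], of 1 "- mean M (Y j)"] by (simp add: Yc_def)
  ultimately have "integrable M (\<lambda>\<omega>. Xc i \<omega> * Yc j \<omega>)" if "i \<in> I" "j \<in> J" for i j
    using that by (intro integrable_mult_square_integrable)
  moreover have "(\<Sum>i\<in>I. a i * X i \<omega>) - mean M (\<lambda>\<omega>. \<Sum>i\<in>I. a i * X i \<omega>) = (\<Sum>i\<in>I. a i * Xc i \<omega>)"
    for \<omega>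
    using assms(1,3) square_integrable_integrable
    by (simp add: mean_sum Xc_def sum_subtractf[symmetric] right_diff_distrib)
  moreover have "(\<Sum>j\<in>J. b j * Y j \<omega>) - mean M (\<lambda>\<omega>. \<Sum>j\<in>J. b j * Y j \<omega>) = (\<Sum>j\<in>J. b j * Yc j \<omega>)"
    for \<omega>
    using assms(2,4) square_integrable_integrable
    by (simp add: mean_sum Yc_def sum_subtractf[symmetric] right_diff_distrib)
  ultimately show ?thesis
    using assms(1,2)
    by (simp add: cov_def sum_product mult_ac Bochner_Integration.integral_sum Xc_def Yc_def)
qed

lemma var_affine: "integrable M X \<Longrightarrow> var M (\<lambda>\<omega>. a * X \<omega> + b) = a\<^sup>2 * var M X"
  by (simp add: var_def cov_affine power2_eq_square)

lemma var_diff: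
  assumes "square_integrable M X" "square_integrable M Y"
  shows "var M (\<lambda>\<omega>. X \<omega> - Y \<omega>) = var M X + var M Y - 2 * cov M X Y"
proof -
  define Z where "Z b = (if b then X else Y)" for b
  define a where "a b = (if b then 1 else (-1::real))" for b
  have "(\<lambda>\<omega>. X \<omega> - Y \<omega>) = (\<lambda>\<omega>. \<Sum>b\<in>UNIV. a b * Z b \<omega>)"
    by (simp add: UNIV_bool a_def Z_def)
  then have "var M (\<lambda>\<omega>. X \<omega> - Y \<omega>) = (\<Sum>i\<in>UNIV. \<Sum>j\<in>UNIV. a i * a j * cov M (Z i) (Z j))"
    unfolding var_def using assms by (simp only:) (rule cov_sum, auto simp: Z_def)
  then show ?thesis
    using cov_commute[of Y X] by (simp add: UNIV_bool a_def Z_def var_def)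
qed

lemma standardize_nth_affine:
  "(\<lambda>\<omega>. standardize M z \<omega> $ i) = (\<lambda>\<omega>. (1 / sqrt (var M (\<lambda>\<eta>. z \<eta> $ i))) * z \<omega> $ i
     + - mean M (\<lambda>\<eta>. z \<eta> $ i) / sqrt (var M (\<lambda>\<eta>. z \<eta> $ i)))"
  by (simp add: standardize_def fun_eq_iff diff_divide_distrib)

lemma square_integrable_standardize:
  "square_integrable M (\<lambda>\<omega>. z \<omega> $ i) \<Longrightarrow> square_integrable M (\<lambda>\<omega>. standardize M z \<omega> $ i)"
  unfolding standardize_nth_affine by (rule square_integrable_affine)

lemma var_standardize:
  assumes "square_integrable M (\<lambda>\<omega>. z \<omega> $ i)" and "var M (\<lambda>\<omega>. z \<omega> $ i) > 0"
  shows "var M (\<lambda>\<omega>. standardize M z \<omega> $ i) = 1"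
proof -
  have "integrable M (\<lambda>\<omega>. z \<omega> $ i)"
    using assms(1) by (rule square_integrable_integrable)
  then have "var M (\<lambda>\<omega>. standardize M z \<omega> $ i)
      = (1 / sqrt (var M (\<lambda>\<eta>. z \<eta> $ i)))\<^sup>2 * var M (\<lambda>\<eta>. z \<eta> $ i)"
    unfolding standardize_nth_affine by (rule var_affine)
  then show ?thesis
    using assms(2) by (simp add: power_divide)
qed

lemma cov_inner_cross_cov:
  assumes "\<And>i. square_integrable M (\<lambda>\<omega>. x \<omega> $ i)" and "\<And>j. square_integrable M (\<lambda>\<omega>. y \<omega> $ j)"
  shows "cov M (\<lambda>\<omega>. u \<bullet> x \<omega>) (\<lambda>\<omega>. v \<bullet> y \<omega>) = u \<bullet> (cross_cov M x y *v v)"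
proof -
  have "cov M (\<lambda>\<omega>. u \<bullet> x \<omega>) (\<lambda>\<omega>. v \<bullet> y \<omega>)
      = cov M (\<lambda>\<omega>. \<Sum>i\<in>UNIV. u $ i * x \<omega> $ i) (\<lambda>\<omega>. \<Sum>j\<in>UNIV. v $ j * y \<omega> $ j)"
    by (simp add: inner_vec_def)
  also have "\<dots> = (\<Sum>i\<in>UNIV. \<Sum>j\<in>UNIV. u $ i * v $ j * cov M (\<lambda>\<omega>. x \<omega> $ i) (\<lambda>\<omega>. y \<omega> $ j))"
    using assms by (intro cov_sum) auto
  also have "\<dots> = u \<bullet> (cross_cov M x y *v v)"
    by (simp add: inner_vec_def matrix_vector_mult_def cross_cov_def sum_distrib_left mult_ac)
  finally show ?thesis .
qed

lemma sum_var_diff_eq_trace: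
  fixes x y :: "'a \<Rightarrow> real^'n"
  assumes "\<And>i. square_integrable M (\<lambda>\<omega>. x \<omega> $ i)" and "\<And>i. square_integrable M (\<lambda>\<omega>. y \<omega> $ i)"
    and "\<And>i. var M (\<lambda>\<omega>. x \<omega> $ i) = 1" and "\<And>i. var M (\<lambda>\<omega>. y \<omega> $ i) = 1"
  shows "(\<Sum>l\<in>UNIV. var M (\<lambda>\<omega>. x \<omega> $ l - y \<omega> $ l)) = 2 * real CARD('n) - 2 * trace (cross_cov M x y)"
proof -
  have "(\<Sum>l\<in>UNIV. var M (\<lambda>\<omega>. x \<omega> $ l - y \<omega> $ l)) = (\<Sum>l\<in>UNIV. 2 - 2 * cross_cov M x y $ l $ l)"
    using assms by (intro sum.cong) (simp_all add: var_diff cross_cov_def)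
  then show ?thesis
    by (simp add: sum_subtractf sum_distrib_left trace_def)
qed

end

lemma (in prob_space) m_SVD_eq_mean_singular_value:
  fixes z w :: "'a \<Rightarrow> real^'n"
  assumes "\<And>i. square_integrable M (\<lambda>\<omega>. standardize M z \<omega> $ i)"
    and "\<And>i. square_integrable M (\<lambda>\<omega>. standardize M w \<omega> $ i)"
  obtains U s V where "is_svd (cross_cov M (standardize M z) (standardize M w)) U s V"
    and "m_SVD M z w = (\<Sum>k\<in>UNIV. s $ k) / CARD('n)"
proof -
  define \<Sigma> where "\<Sigma> = cross_cov M (standardize M z) (standardize M w)"
  define UV where "UV = (SOME (U, V). \<exists>s. is_svd \<Sigma> U s V)"
  obtain U V where UV: "UV = (U, V)"
    by fastforce
  have "\<exists>s. is_svd \<Sigma> U s V"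
    using someI_ex[of "\<lambda>(U, V). \<exists>s. is_svd \<Sigma> U s V"] svd_exists[of \<Sigma>]
    unfolding UV_def[symmetric] UV by auto
  then obtain s where svd: "is_svd \<Sigma> U s V"
    by blast
  have "cov M (\<lambda>\<omega>. column k U \<bullet> standardize M z \<omega>) (\<lambda>\<omega>. column k V \<bullet> standardize M w \<omega>) = s $ k"
    for k
    using assms is_svd_diagonalizes[OF svd]
    by (simp add: cov_inner_cross_cov column_inner_mult_column \<Sigma>_def[symmetric] diag_mat_def)
  then have "m_SVD M z w = (\<Sum>k\<in>UNIV. s $ k) / CARD('n)"
    using UV by (simp add: m_SVD_def Let_def \<Sigma>_def[symmetric] UV_def[symmetric])
  with svd show ?thesis
    using that unfolding \<Sigma>_def by blast
qed

lemma one_minus_sqrt_le_mean: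
  fixes m t S :: real
  assumes "1 \<le> m" and "t \<le> S" and "0 \<le> S" and "t \<le> m"
  shows "1 - sqrt (m * (2 * m - 2 * t)) \<le> S / m"
proof -
  have "0 < m"
    using assms(1) by simp
  have gap: "1 - t / m \<le> m * (2 * m - 2 * t)"
  proof -
    have "0 \<le> 1 - t / m"
      using assms(4) \<open>0 < m\<close> by simp
    moreover have "1 \<le> 2 * m\<^sup>2"
      using one_le_power[OF assms(1), of 2] by linarith
    ultimately have "1 - t / m \<le> 2 * m\<^sup>2 * (1 - t / m)"
      using mult_right_mono[of 1 "2 * m\<^sup>2" "1 - t / m"] by simp
    also have "\<dots> = m * (2 * m - 2 * t)"
      using \<open>0 < m\<close> by (simp add: field_simps power2_eq_square)
    finally show ?thesis .
  qed
  define y where "y = 1 - S / m"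
  have "y \<le> 1"
    using assms(3) \<open>0 < m\<close> by (simp add: y_def)
  have "y \<le> 1 - t / m"
    using assms(2) \<open>0 < m\<close> by (simp add: y_def divide_right_mono)
  show ?thesis
  proof (cases "y \<le> 0")
    case True
    have "0 \<le> sqrt (m * (2 * m - 2 * t))"
      using assms(1,4) by simp
    then show ?thesis
      using True unfolding y_def by linarith
  next
    case False
    then have "y\<^sup>2 \<le> y"
      using \<open>y \<le> 1\<close> mult_left_mono[of y 1 y] by (simp add: power2_eq_square)
    then have "y\<^sup>2 \<le> m * (2 * m - 2 * t)"
      using \<open>y \<le> 1 - t / m\<close> gap by linarith
    then have "y \<le> sqrt (m * (2 * m - 2 * t))"
      by (rule real_le_rsqrt)
    then show ?thesis
      by (simp add: y_def)
  qed
qed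

theorem mainTheorem9:
  fixes p :: "'a measure" and z w :: "'a \<Rightarrow> real^'n"
  assumes "prob_space p"
    and "\<And>i. (\<lambda>\<omega>. z \<omega> $ i) \<in> borel_measurable p"
    and "\<And>i. (\<lambda>\<omega>. w \<omega> $ i) \<in> borel_measurable p"
    and "\<And>i. integrable p (\<lambda>\<omega>. (z \<omega> $ i)\<^sup>2)"
    and "\<And>i. integrable p (\<lambda>\<omega>. (w \<omega> $ i)\<^sup>2)"
    and "\<And>i. var p (\<lambda>\<omega>. z \<omega> $ i) > 0"
    and "\<And>i. var p (\<lambda>\<omega>. w \<omega> $ i) > 0"
    and "rank (cross_cov p (standardize p z) (standardize p z)) = CARD('n)"
    and "rank (cross_cov p (standardize p z) (standardize p w)) = CARD('n)"
  shows "m_SVD p z w \<ge> 1 - sqrt (real CARD('n) *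
           (\<Sum>l\<in>UNIV. var p (\<lambda>\<omega>. standardize p z \<omega> $ l - standardize p w \<omega> $ l)))"
proof -
  interpret prob_space p
    by fact
  have z: "square_integrable p (\<lambda>\<omega>. z \<omega> $ i)" and w: "square_integrable p (\<lambda>\<omega>. w \<omega> $ i)" for i
    using assms(2-5) by (simp_all add: square_integrable_def)
  obtain U s V where svd: "is_svd (cross_cov p (standardize p z) (standardize p w)) U s V"
    and m_SVD: "m_SVD p z w = (\<Sum>k\<in>UNIV. s $ k) / CARD('n)"
    using m_SVD_eq_mean_singular_value[OF square_integrable_standardize[OF z]
        square_integrable_standardize[OF w]] by blast
  have var_sum: "(\<Sum>l\<in>UNIV. var p (\<lambda>\<omega>. standardize p z \<omega> $ l - standardize p w \<omega> $ l))
      = 2 * real CARD('n) - 2 * trace (cross_cov p (standardize p z) (standardize p w))"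
    using z w assms(6,7)
    by (intro sum_var_diff_eq_trace square_integrable_standardize var_standardize)
  have "0 \<le> (\<Sum>l\<in>UNIV. var p (\<lambda>\<omega>. standardize p z \<omega> $ l - standardize p w \<omega> $ l))"
    by (intro sum_nonneg var_nonneg)
  moreover have "0 \<le> (\<Sum>k\<in>UNIV. s $ k)"
    using svd by (simp add: is_svd_def sum_nonneg)
  ultimately show ?thesis
    unfolding m_SVD var_sum
    by (intro one_minus_sqrt_le_mean trace_le_sum_singular_values[OF svd]) (simp_all add: var_sum)
qed

end
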